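(* Assume (A1)–(A3) below. Then for each instrument $\ell\in\{1,\dots,L\}$, $$\mathrm{Wald}_\ell=\sum_{t\in\mathcal T}\mathrm{LATE}_t\,\alpha_t(\ell),\qquad \sum_{t\in\mathcal T}\alpha_t(\ell)=1,$$ where $\alpha_t(\ell)=\theta_t\,\varphi_t(\ell)/\pi_\ell$ and $$\varphi_t(\ell)=\sum_{z_{-\ell}\in\{0,1\}^{L-1}}\bigl[t(1,z_{-\ell})\,q_\ell(z_{-\ell})-t(0,z_{-\ell})\,q^0_\ell(z_{-\ell})\bigr].$$
   Context: We observe i.i.d. draws of $(Y_i,D_i,Z_{1i},\dots,Z_{Li})$ with $Y_i\in\mathbb R$, $D_i\in\{0,1\}$ and $L\ge2$ binary instruments $Z_{\ell i}\in\{0,1\}$; $\mathbf Z_i=(Z_{1i},\dots,Z_{Li})'$. Each unit has potential outcomes $Y_i(0),Y_i(1)$ and a potential treatment function (its "compliance type") $D_i(\cdot):\{0,1\}^L\to\{0,1\}$; observed $D_i=D_i(\mathbf Z_i)$ and $Y_i=D_iY_i(1)+(1-D_i)Y_i(0)$. $\mathcal T$ is the set of compliance types, $\theta_t=P(D_i(\cdot)=t)$, $\mathrm{LATE}_t=\mathbb E[Y_i(1)-Y_i(0)\mid D_i(\cdot)=t]$. For a type $t$, $t(z_\ell,z_{-\ell})$ denotes its treatment decision at instrument value with $\ell$-th coordinate $z_\ell$ and remaining coordinates $z_{-\ell}$. Let $p_\ell=P(Z_{\ell i}=1)$, $\pi_\ell=\mathbb E[D_i\mid Z_{\ell i}=1]-\mathbb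 E[D_i\mid Z_{\ell i}=0]$, $\rho_\ell=\mathbb E[Y_i\mid Z_{\ell i}=1]-\mathbb E[Y_i\mid Z_{\ell i}=0]$, $\mathrm{Wald}_\ell=\rho_\ell/\pi_\ell$, $\Sigma_Z=\mathrm{Var}(\mathbf Z_i)$. With $Z_{-\ell}$ the vector of the other $L-1$ instruments, $q_\ell(z_{-\ell})=P(Z_{-\ell}=z_{-\ell}\mid Z_\ell=1)$ and $q^0_\ell(z_{-\ell})=P(Z_{-\ell}=z_{-\ell}\mid Z_\ell=0)$. Assumptions: (A1) $(Y_i(0),Y_i(1),D_i(\cdot))$ is independent of $\mathbf Z_i$. (A2) For every $i$, $D_i(z)$ is nondecreasing in each coordinate $z_k$, $k=1,\dots,L$. (A3) $p_\ell>0$ and $\pi_\ell>0$ for each $\ell$, and $\Sigma_Z$ is positive definite. *)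

theory Defs
  imports "HOL-Probability.Probability"
begin

text \<open>Instruments are indexed by 0..<L. An instrument value z in {0,1}^L is encoded as
  the set of indices l with z_l = 1, i.e. a subset of {..<L}. A compliance type is a
  function from {0,1}^L (= Pow {..<L}) to {0,1} (= bool), extensional outside its domain.\<close>

definition ctypes :: "nat \<Rightarrow> (nat set \<Rightarrow> bool) set" where
  "ctypes L = (Pow {..<L} \<rightarrow>\<^sub>E (UNIV :: bool set))"

definition cexp :: "'a measure \<Rightarrow> ('a \<Rightarrow> real) \<Rightarrow> ('a \<Rightarrow> bool) \<Rightarrow> real" where
  "cexp M X P = (\<integral>\<omega>. indicator {\<omega>\<in>space M. P \<omega>} \<omega> * X \<omega> \<partial>M)
                 / measure M {\<omega>\<in>space M. P \<omega>}"

definition cprob :: "'a measure \<Rightarrow> ('a \<Rightarrow> bool) \<Rightarrow> ('a \<Rightarrow> bool) \<Rightarrow> real" where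
  "cprob M A P = measure M {\<omega>\<in>space M. A \<omega> \<and> P \<omega>} / measure M {\<omega>\<in>space M. P \<omega>}"

definition Dobs :: "('a \<Rightarrow> nat set \<Rightarrow> bool) \<Rightarrow> ('a \<Rightarrow> nat set) \<Rightarrow> 'a \<Rightarrow> real" where
  "Dobs D Z \<omega> = of_bool (D \<omega> (Z \<omega>))"

definition Yobs :: "('a \<Rightarrow> nat set \<Rightarrow> bool) \<Rightarrow> ('a \<Rightarrow> nat set) \<Rightarrow> ('a \<Rightarrow> real) \<Rightarrow> ('a \<Rightarrow> real) \<Rightarrow> 'a \<Rightarrow> real" where
  "Yobs D Z Y0 Y1 \<omega> = (if D \<omega> (Z \<omega>) then Y1 \<omega> else Y0 \<omega>)"

definition pZ :: "'a measure \<Rightarrow> ('a \<Rightarrow> nat set) \<Rightarrow> nat \<Rightarrow> real" where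
  "pZ M Z l = measure M {\<omega>\<in>space M. l \<in> Z \<omega>}"

definition piZ :: "'a measure \<Rightarrow> ('a \<Rightarrow> nat set \<Rightarrow> bool) \<Rightarrow> ('a \<Rightarrow> nat set) \<Rightarrow> nat \<Rightarrow> real" where
  "piZ M D Z l = cexp M (Dobs D Z) (\<lambda>\<omega>. l \<in> Z \<omega>) - cexp M (Dobs D Z) (\<lambda>\<omega>. l \<notin> Z \<omega>)"

definition rhoZ :: "'a measure \<Rightarrow> ('a \<Rightarrow> nat set \<Rightarrow> bool) \<Rightarrow> ('a \<Rightarrow> nat set)
    \<Rightarrow> ('a \<Rightarrow> real) \<Rightarrow> ('a \<Rightarrow> real) \<Rightarrow> nat \<Rightarrow> real" where
  "rhoZ M D Z Y0 Y1 l = cexp M (Yobs D Z Y0 Y1) (\<lambda>\<omega>. l \<in> Z \<omega>)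
                       - cexp M (Yobs D Z Y0 Y1) (\<lambda>\<omega>. l \<notin> Z \<omega>)"

definition wald :: "'a measure \<Rightarrow> ('a \<Rightarrow> nat set \<Rightarrow> bool) \<Rightarrow> ('a \<Rightarrow> nat set)
    \<Rightarrow> ('a \<Rightarrow> real) \<Rightarrow> ('a \<Rightarrow> real) \<Rightarrow> nat \<Rightarrow> real" where
  "wald M D Z Y0 Y1 l = rhoZ M D Z Y0 Y1 l / piZ M D Z l"

definition theta :: "'a measure \<Rightarrow> ('a \<Rightarrow> nat set \<Rightarrow> bool) \<Rightarrow> (nat set \<Rightarrow> bool) \<Rightarrow> real" where
  "theta M D t = measure M {\<omega>\<in>space M. D \<omega> = t}"

definition LATE :: "'a measure \<Rightarrow> ('a \<Rightarrow> nat set \<Rightarrow> bool) \<Rightarrow> ('a \<Rightarrow> real) \<Rightarrow> ('a \<Rightarrow> real)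
    \<Rightarrow> (nat set \<Rightarrow> bool) \<Rightarrow> real" where
  "LATE M D Y0 Y1 t = cexp M (\<lambda>\<omega>. Y1 \<omega> - Y0 \<omega>) (\<lambda>\<omega>. D \<omega> = t)"

definition q1 :: "'a measure \<Rightarrow> ('a \<Rightarrow> nat set) \<Rightarrow> nat \<Rightarrow> nat set \<Rightarrow> real" where
  "q1 M Z l w = cprob M (\<lambda>\<omega>. Z \<omega> - {l} = w) (\<lambda>\<omega>. l \<in> Z \<omega>)"

definition q0 :: "'a measure \<Rightarrow> ('a \<Rightarrow> nat set) \<Rightarrow> nat \<Rightarrow> nat set \<Rightarrow> real" where
  "q0 M Z l w = cprob M (\<lambda>\<omega>. Z \<omega> - {l} = w) (\<lambda>\<omega>. l \<notin> Z \<omega>)"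

text \<open>t(1,w) = t (insert l w), t(0,w) = t w.\<close>
definition phi :: "nat \<Rightarrow> 'a measure \<Rightarrow> ('a \<Rightarrow> nat set) \<Rightarrow> (nat set \<Rightarrow> bool) \<Rightarrow> nat \<Rightarrow> real" where
  "phi L M Z t l = (\<Sum>w\<in>Pow ({..<L} - {l}).
      of_bool (t (insert l w)) * q1 M Z l w - of_bool (t w) * q0 M Z l w)"

definition alpha :: "nat \<Rightarrow> 'a measure \<Rightarrow> ('a \<Rightarrow> nat set \<Rightarrow> bool) \<Rightarrow> ('a \<Rightarrow> nat set)
    \<Rightarrow> (nat set \<Rightarrow> bool) \<Rightarrow> nat \<Rightarrow> real" where
  "alpha L M D Z t l = theta M D t * phi L M Z t l / piZ M D Z l"

definition covZ :: "'a measure \<Rightarrow> ('a \<Rightarrow> nat set) \<Rightarrow> nat \<Rightarrow> nat \<Rightarrow> real" where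
  "covZ M Z j k = (\<integral>\<omega>. of_bool (j \<in> Z \<omega>) * of_bool (k \<in> Z \<omega>) \<partial>M)
      - (\<integral>\<omega>. of_bool (j \<in> Z \<omega>) \<partial>M) * (\<integral>\<omega>. of_bool (k \<in> Z \<omega>) \<partial>M)"

definition covZ_posdef :: "nat \<Rightarrow> 'a measure \<Rightarrow> ('a \<Rightarrow> nat set) \<Rightarrow> bool" where
  "covZ_posdef L M Z \<longleftrightarrow> (\<forall>c :: nat \<Rightarrow> real. (\<exists>j<L. c j \<noteq> 0) \<longrightarrow>
      (\<Sum>j<L. \<Sum>k<L. c j * covZ M Z j k * c k) > 0)"

text \<open>Independence of two random elements with possibly different value types
  (the library's indep_var requires a common type): the standard definition
  P(X \<in> A, W \<in> B) = P(X \<in> A) P(W \<in> B) for all measurable A, B.\<close>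
definition indep_rv :: "'a measure \<Rightarrow> 'b measure \<Rightarrow> ('a \<Rightarrow> 'b) \<Rightarrow> 'c measure \<Rightarrow> ('a \<Rightarrow> 'c) \<Rightarrow> bool" where
  "indep_rv M Ma X Mb W \<longleftrightarrow> X \<in> M \<rightarrow>\<^sub>M Ma \<and> W \<in> M \<rightarrow>\<^sub>M Mb \<and>
     (\<forall>A\<in>sets Ma. \<forall>B\<in>sets Mb.
        measure M {\<omega>\<in>space M. X \<omega> \<in> A \<and> W \<omega> \<in> B}
        = measure M {\<omega>\<in>space M. X \<omega> \<in> A} * measure M {\<omega>\<in>space M. W \<omega> \<in> B})"

end

theory Submission
  imports Defs
begin

text \<open>Write \<open>Y = Y(0) + D (Y(1) - Y(0))\<close>. Since the instruments are independent of
  \<open>(Y(0), Y(1), D(\<cdot>))\<close>, conditioning on an instrument event \<open>{Q(Z)}\<close> leaves \<open>E[Y(0)]\<close>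
  unchanged and splits the treated part by compliance type:
  \<open>E[D (Y(1) - Y(0)) | Q(Z)] = \<Sum>\<^sub>t \<theta>\<^sub>t LATE\<^sub>t P(t(Z) | Q(Z))\<close> and
  \<open>E[D | Q(Z)] = \<Sum>\<^sub>t \<theta>\<^sub>t P(t(Z) | Q(Z))\<close>. Moreover
  \<open>\<phi>\<^sub>t(\<ell>) = P(t(Z) | Z\<^sub>\<ell> = 1) - P(t(Z) | Z\<^sub>\<ell> = 0)\<close>, so taking the difference between the
  events \<open>Z\<^sub>\<ell> = 1\<close> and \<open>Z\<^sub>\<ell> = 0\<close> gives \<open>\<rho>\<^sub>\<ell> = \<Sum>\<^sub>t \<theta>\<^sub>t LATE\<^sub>t \<phi>\<^sub>t(\<ell>)\<close> and
  \<open>\<pi>\<^sub>\<ell> = \<Sum>\<^sub>t \<theta>\<^sub>t \<phi>\<^sub>t(\<ell>)\<close>; dividing by \<open>\<pi>\<^sub>\<ell>\<close> gives both claims.\<close>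

lemma (in finite_measure) measure_mult_cexp:
  assumes "{\<omega>\<in>space M. P \<omega>} \<in> sets M"
  shows "measure M {\<omega>\<in>space M. P \<omega>} * cexp M X P
       = (\<integral>\<omega>. indicator {\<omega>\<in>space M. P \<omega>} \<omega> * X \<omega> \<partial>M)"
proof (cases "measure M {\<omega>\<in>space M. P \<omega>} = 0")
  case True
  then have "{\<omega>\<in>space M. P \<omega>} \<in> null_sets M"
    using assms by (simp add: null_sets_def emeasure_eq_measure)
  then have "AE \<omega> in M. indicator {\<omega>\<in>space M. P \<omega>} \<omega> * X \<omega> = 0"
    by (rule AE_I') (auto simp: indicator_def)
  then show ?thesis
    using True by (simp add: integral_eq_zero_AE)
next
  case False
  then show ?thesis by (simp add: cexp_def)
qed

lemma (in prob_space) sum_cprob_partition: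
  assumes "finite W" and "\<And>\<omega>. \<omega> \<in> space M \<Longrightarrow> S \<omega> \<in> W"
    and "\<And>w. {\<omega>\<in>space M. S \<omega> = w \<and> A \<omega> \<and> P \<omega>} \<in> events"
    and "{\<omega>\<in>space M. A \<omega> \<and> P \<omega>} \<in> events"
  shows "(\<Sum>w\<in>W. cprob M (\<lambda>\<omega>. S \<omega> = w \<and> A \<omega>) P) = cprob M A P"
proof -
  have "prob {\<omega>\<in>space M. A \<omega> \<and> P \<omega>} = (\<Sum>w\<in>W. prob {\<omega>\<in>space M. S \<omega> = w \<and> A \<omega> \<and> P \<omega>})"
    using assms by (intro prob_sum) auto
  then show ?thesis
    by (simp add: cprob_def sum_divide_distrib conj_assoc)
qed

lemma (in prob_space) distr_density_indep_event:
  assumes ind: "indep_rv M Ma X Mb W" and B: "B \<in> sets Mb"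
  defines "E \<equiv> {\<omega>\<in>space M. W \<omega> \<in> B}"
  shows "distr (density M (indicator E)) Ma X = density (distr M Ma X) (\<lambda>_. ennreal (prob E))"
proof (rule measure_eqI)
  have X: "X \<in> M \<rightarrow>\<^sub>M Ma" and W: "W \<in> M \<rightarrow>\<^sub>M Mb"
    using ind by (auto simp: indep_rv_def)
  have E: "E \<in> events"
    using measurable_sets[OF W B] by (simp add: E_def vimage_def Int_def conj_commute)
  fix A assume "A \<in> sets (distr (density M (indicator E)) Ma X)"
  then have A: "A \<in> sets Ma" by simp
  have XA: "X -` A \<inter> space M \<in> events"
    using measurable_sets[OF X A] .
  have "emeasure (distr (density M (indicator E)) Ma X) A
      = (\<integral>\<^sup>+\<omega>. indicator E \<omega> * indicator (X -` A \<inter> space M) \<omega> \<partial>M)"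
    using A E XA X by (simp add: emeasure_distr emeasure_density)
  also have "\<dots> = emeasure M (E \<inter> (X -` A \<inter> space M))"
    using E XA by (simp add: indicator_inter_arith[symmetric])
  also have "E \<inter> (X -` A \<inter> space M) = {\<omega>\<in>space M. X \<omega> \<in> A \<and> W \<omega> \<in> B}"
    by (auto simp: E_def)
  also have "emeasure M \<dots> = ennreal (prob E) * emeasure M (X -` A \<inter> space M)"
    using ind A B
    by (simp add: indep_rv_def emeasure_eq_measure E_def ennreal_mult' vimage_def Int_def conj_commute mult.commute)
  also have "\<dots> = emeasure (density (distr M Ma X) (\<lambda>_. ennreal (prob E))) A"
    using A X by (simp add: emeasure_density nn_integral_cmult_indicator emeasure_distr)
  finally show "emeasure (distr (density M (indicator E)) Ma X) A
      = emeasure (density (distr M Ma X) (\<lambda>_. ennreal (prob E))) A" .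
qed simp

lemma (in prob_space) integral_indicator_indep:
  fixes g :: "'b \<Rightarrow> real"
  assumes ind: "indep_rv M Ma X Mb W" and B: "B \<in> sets Mb"
    and g: "g \<in> borel_measurable Ma"
  shows "(\<integral>\<omega>. indicator {\<omega>\<in>space M. W \<omega> \<in> B} \<omega> * g (X \<omega>) \<partial>M)
       = prob {\<omega>\<in>space M. W \<omega> \<in> B} * (\<integral>\<omega>. g (X \<omega>) \<partial>M)"
proof -
  let ?E = "{\<omega>\<in>space M. W \<omega> \<in> B}"
  have X: "X \<in> M \<rightarrow>\<^sub>M Ma" and W: "W \<in> M \<rightarrow>\<^sub>M Mb"
    using ind by (auto simp: indep_rv_def)
  have E: "?E \<in> events"
    using measurable_sets[OF W B] by (simp add: vimage_def Int_def conj_commute)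
  have "(\<integral>\<omega>. indicator ?E \<omega> * g (X \<omega>) \<partial>M)
      = (\<integral>\<omega>. g (X \<omega>) \<partial>density M (\<lambda>\<omega>. ennreal (indicator ?E \<omega>)))"
    using E g X by (subst integral_density) auto
  also have "\<dots> = (\<integral>x. g x \<partial>distr (density M (indicator ?E)) Ma X)"
    using g X by (subst integral_distr) (auto simp: ennreal_indicator)
  also have "\<dots> = (\<integral>x. g x \<partial>density (distr M Ma X) (\<lambda>_. ennreal (prob ?E)))"
    using distr_density_indep_event[OF ind B] by simp
  also have "\<dots> = prob ?E * (\<integral>\<omega>. g (X \<omega>) \<partial>M)"
    using g X by (subst integral_density) (auto simp: integral_distr)
  finally show ?thesis .
qed

lemma covZ_posdef_diag_pos:
  assumes "covZ_posdef L M Z" and "l < L"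
  shows "covZ M Z l l > 0"
proof -
  have "0 < (\<Sum>j<L. \<Sum>k<L. of_bool (j = l) * covZ M Z j k * of_bool (k = l))"
    using assms(1)[unfolded covZ_posdef_def, rule_format, of "\<lambda>j. of_bool (j = l)"] assms(2) by auto
  also have "\<dots> = (\<Sum>j<L. if j = l then \<Sum>k<L. if k = l then covZ M Z l l else 0 else 0)"
    by (intro sum.cong) auto
  also have "\<dots> = covZ M Z l l"
    using assms(2) by simp
  finally show ?thesis .
qed

lemma covZ_diag: "covZ M Z l l = pZ M Z l * (1 - pZ M Z l)"
proof -
  have "(\<integral>\<omega>. of_bool (l \<in> Z \<omega>) \<partial>M) = (\<integral>\<omega>. indicator {\<omega>. l \<in> Z \<omega>} \<omega> \<partial>M)"
    by (simp add: indicator_def)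
  also have "\<dots> = pZ M Z l"
    by (simp add: pZ_def Int_def conj_commute)
  finally have "(\<integral>\<omega>. of_bool (l \<in> Z \<omega>) \<partial>M) = pZ M Z l" .
  then show ?thesis
    by (simp add: covZ_def of_bool_conj[symmetric] algebra_simps)
qed

locale binary_iv_model = prob_space M
  for M :: "'a measure" and L :: nat and Z :: "'a \<Rightarrow> nat set"
    and D :: "'a \<Rightarrow> nat set \<Rightarrow> bool" and Y0 Y1 :: "'a \<Rightarrow> real" +
  assumes Z_measurable: "Z \<in> M \<rightarrow>\<^sub>M count_space UNIV"
    and Z_range: "\<And>\<omega>. \<omega> \<in> space M \<Longrightarrow> Z \<omega> \<subseteq> {..<L}"
    and D_measurable: "D \<in> M \<rightarrow>\<^sub>M count_space UNIV"
    and D_range: "\<And>\<omega>. \<omega> \<in> space M \<Longrightarrow> D \<omega> \<in> ctypes L"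
    and integrable_Y0: "integrable M Y0"
    and integrable_Y1: "integrable M Y1"
    and indep_potential_instruments: "indep_rv M (borel \<Otimes>\<^sub>M (borel \<Otimes>\<^sub>M count_space UNIV))
          (\<lambda>\<omega>. (Y0 \<omega>, Y1 \<omega>, D \<omega>)) (count_space UNIV) Z"
begin

lemma pred_Z[measurable]: "Measurable.pred M (\<lambda>\<omega>. Q (Z \<omega>))"
  by (rule measurable_compose[OF Z_measurable]) simp

lemma pred_D[measurable]: "Measurable.pred M (\<lambda>\<omega>. Q (D \<omega>))"
  by (rule measurable_compose[OF D_measurable]) simp

lemma finite_ctypes: "finite (ctypes L)"
  unfolding ctypes_def by (intro finite_PiE) auto

lemma pred_treated[measurable]: "Measurable.pred M (\<lambda>\<omega>. D \<omega> (Z \<omega>))"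
proof -
  have "Measurable.pred M (\<lambda>\<omega>. \<exists>t\<in>ctypes L. D \<omega> = t \<and> t (Z \<omega>))"
    using finite_ctypes by measurable
  also have "?this \<longleftrightarrow> ?thesis"
    using D_range by (intro measurable_cong) auto
  finally show ?thesis .
qed

lemma indicator_treated_eq_sum_ctypes:
  assumes "\<omega> \<in> space M"
  shows "indicator {\<omega>\<in>space M. Q (Z \<omega>) \<and> D \<omega> (Z \<omega>)} \<omega>
       = (\<Sum>t\<in>ctypes L. indicator {\<omega>\<in>space M. Z \<omega> \<in> {z. t z \<and> Q z}} \<omega> * indicator {t} (D \<omega>) :: real)"
proof -
  define E where "E t = {\<omega>\<in>space M. Z \<omega> \<in> {z. t z \<and> Q z}}" for t
  have "(\<Sum>t\<in>ctypes L. indicator (E t) \<omega> * indicator {t} (D \<omega>) :: real)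
      = (\<Sum>t\<in>ctypes L. if t = D \<omega> then indicator (E t) \<omega> else 0)"
    by (intro sum.cong) auto
  also have "\<dots> = indicator (E (D \<omega>)) \<omega>"
    using D_range[OF assms] finite_ctypes by simp
  finally show ?thesis
    using assms by (auto simp: E_def indicator_def)
qed

lemma integral_treated_instrument_event:
  fixes v :: "real \<times> real \<times> (nat set \<Rightarrow> bool) \<Rightarrow> real"
  assumes v: "v \<in> borel_measurable (borel \<Otimes>\<^sub>M (borel \<Otimes>\<^sub>M count_space UNIV))"
    and v_int: "integrable M (\<lambda>\<omega>. v (Y0 \<omega>, Y1 \<omega>, D \<omega>))"
  shows "(\<integral>\<omega>. indicator {\<omega>\<in>space M. Q (Z \<omega>) \<and> D \<omega> (Z \<omega>)} \<omega> * v (Y0 \<omega>, Y1 \<omega>, D \<omega>) \<partial>M)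
       = (\<Sum>t\<in>ctypes L. (\<integral>\<omega>. indicator {\<omega>\<in>space M. D \<omega> = t} \<omega> * v (Y0 \<omega>, Y1 \<omega>, D \<omega>) \<partial>M)
            * prob {\<omega>\<in>space M. t (Z \<omega>) \<and> Q (Z \<omega>)})"
proof -
  define X where "X \<omega> = (Y0 \<omega>, Y1 \<omega>, D \<omega>)" for \<omega>
  define g where "g t x = indicator {t} (snd (snd x)) * v x" for t x
  define E where "E t = {\<omega>\<in>space M. Z \<omega> \<in> {z. t z \<and> Q z}}" for t
  have g_X: "g t (X \<omega>) = indicator {\<omega>\<in>space M. D \<omega> = t} \<omega> * v (X \<omega>)" if "\<omega> \<in> space M" for t \<omega>
    using that by (simp add: g_def X_def indicator_def)
  have g_measurable: "g t \<in> borel_measurable (borel \<Otimes>\<^sub>M (borel \<Otimes>\<^sub>M count_space UNIV))" for t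
    unfolding g_def using v
    by (intro borel_measurable_times borel_measurable_indicator' measurable_snd'' measurable_snd) auto
  have integrable_term: "integrable M (\<lambda>\<omega>. indicator (E t) \<omega> * g t (X \<omega>))" for t
  proof -
    have "integrable M (\<lambda>\<omega>. indicator (E t) \<omega> *\<^sub>R (indicator {\<omega>\<in>space M. D \<omega> = t} \<omega> *\<^sub>R v (X \<omega>)))"
      using v_int unfolding E_def X_def by (intro integrable_mult_indicator) auto
    also have "?this \<longleftrightarrow> ?thesis"
      by (intro Bochner_Integration.integrable_cong) (simp_all add: g_X)
    finally show ?thesis .
  qed
  have pointwise: "indicator {\<omega>\<in>space M. Q (Z \<omega>) \<and> D \<omega> (Z \<omega>)} \<omega> * v (X \<omega>)
      = (\<Sum>t\<in>ctypes L. indicator (E t) \<omega> * g t (X \<omega>))" if "\<omega> \<in> space M" for \<omega>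
    using that by (simp add: indicator_treated_eq_sum_ctypes E_def g_def X_def sum_distrib_right mult.assoc)
  have "(\<integral>\<omega>. indicator {\<omega>\<in>space M. Q (Z \<omega>) \<and> D \<omega> (Z \<omega>)} \<omega> * v (X \<omega>) \<partial>M)
      = (\<Sum>t\<in>ctypes L. \<integral>\<omega>. indicator (E t) \<omega> * g t (X \<omega>) \<partial>M)"
    using integrable_term by (simp add: pointwise integral_sum cong: Bochner_Integration.integral_cong)
  also have "\<dots> = (\<Sum>t\<in>ctypes L. prob (E t) * (\<integral>\<omega>. g t (X \<omega>) \<partial>M))"
    unfolding E_def X_def
    by (intro sum.cong refl integral_indicator_indep[OF indep_potential_instruments]
        g_measurable[unfolded X_def]) simp
  also have "\<dots> = (\<Sum>t\<in>ctypes L. (\<integral>\<omega>. indicator {\<omega>\<in>space M. D \<omega> = t} \<omega> * v (X \<omega>) \<partial>M)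
            * prob {\<omega>\<in>space M. t (Z \<omega>) \<and> Q (Z \<omega>)})"
    by (intro sum.cong refl) (simp add: E_def g_X cong: Bochner_Integration.integral_cong)
  finally show ?thesis
    unfolding X_def .
qed

lemma cexp_Dobs_instrument_event:
  "cexp M (Dobs D Z) (\<lambda>\<omega>. Q (Z \<omega>))
     = (\<Sum>t\<in>ctypes L. theta M D t * cprob M (\<lambda>\<omega>. t (Z \<omega>)) (\<lambda>\<omega>. Q (Z \<omega>)))"
proof -
  have "(\<integral>\<omega>. indicator {\<omega>\<in>space M. Q (Z \<omega>)} \<omega> * Dobs D Z \<omega> \<partial>M)
      = (\<integral>\<omega>. indicator {\<omega>\<in>space M. Q (Z \<omega>) \<and> D \<omega> (Z \<omega>)} \<omega> * 1 \<partial>M)"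
    by (intro Bochner_Integration.integral_cong) (auto simp: Dobs_def indicator_def)
  also have "\<dots> = (\<Sum>t\<in>ctypes L. theta M D t * prob {\<omega>\<in>space M. t (Z \<omega>) \<and> Q (Z \<omega>)})"
    by (subst integral_treated_instrument_event) (simp_all add: theta_def)
  finally show ?thesis
    by (simp add: cexp_def cprob_def sum_divide_distrib)
qed

lemma cexp_Yobs_instrument_event:
  assumes "prob {\<omega>\<in>space M. Q (Z \<omega>)} \<noteq> 0"
  shows "cexp M (Yobs D Z Y0 Y1) (\<lambda>\<omega>. Q (Z \<omega>)) = expectation Y0
     + (\<Sum>t\<in>ctypes L. theta M D t * LATE M D Y0 Y1 t * cprob M (\<lambda>\<omega>. t (Z \<omega>)) (\<lambda>\<omega>. Q (Z \<omega>)))"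
proof -
  let ?P = "prob {\<omega>\<in>space M. Q (Z \<omega>)}"
  have "(\<integral>\<omega>. indicator {\<omega>\<in>space M. Q (Z \<omega>)} \<omega> * Yobs D Z Y0 Y1 \<omega> \<partial>M)
      = (\<integral>\<omega>. indicator {\<omega>\<in>space M. Q (Z \<omega>)} \<omega> * Y0 \<omega>
          + indicator {\<omega>\<in>space M. Q (Z \<omega>) \<and> D \<omega> (Z \<omega>)} \<omega> * (Y1 \<omega> - Y0 \<omega>) \<partial>M)"
    by (intro Bochner_Integration.integral_cong) (auto simp: Yobs_def indicator_def)
  also have "\<dots> = (\<integral>\<omega>. indicator {\<omega>\<in>space M. Q (Z \<omega>)} \<omega> * Y0 \<omega> \<partial>M)
      + (\<integral>\<omega>. indicator {\<omega>\<in>space M. Q (Z \<omega>) \<and> D \<omega> (Z \<omega>)} \<omega> * (Y1 \<omega> - Y0 \<omega>) \<partial>M)"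
    using integrable_Y0 integrable_Y1
    by (intro Bochner_Integration.integral_add)
      (auto intro!: integrable_mult_indicator[where 'b=real, simplified])
  also have "(\<integral>\<omega>. indicator {\<omega>\<in>space M. Q (Z \<omega>)} \<omega> * Y0 \<omega> \<partial>M) = ?P * expectation Y0"
    using integral_indicator_indep[OF indep_potential_instruments, of "{z. Q z}" fst] by simp
  also have "(\<integral>\<omega>. indicator {\<omega>\<in>space M. Q (Z \<omega>) \<and> D \<omega> (Z \<omega>)} \<omega> * (Y1 \<omega> - Y0 \<omega>) \<partial>M)
      = (\<Sum>t\<in>ctypes L. theta M D t * LATE M D Y0 Y1 t * prob {\<omega>\<in>space M. t (Z \<omega>) \<and> Q (Z \<omega>)})"
    using integral_treated_instrument_event[of "\<lambda>(y0, y1, _). y1 - y0" Q] integrable_Y0 integrable_Y1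
    by (simp add: theta_def LATE_def measure_mult_cexp)
  finally show ?thesis
    using assms by (simp add: cexp_def cprob_def add_divide_distrib sum_divide_distrib)
qed

lemma phi_eq_cprob_diff:
  "phi L M Z t l = cprob M (\<lambda>\<omega>. t (Z \<omega>)) (\<lambda>\<omega>. l \<in> Z \<omega>)
                 - cprob M (\<lambda>\<omega>. t (Z \<omega>)) (\<lambda>\<omega>. l \<notin> Z \<omega>)"
proof -
  define W where "W = Pow ({..<L} - {l})"
  have partition: "(\<Sum>w\<in>W. cprob M (\<lambda>\<omega>. Z \<omega> - {l} = w \<and> t (Z \<omega>)) P) = cprob M (\<lambda>\<omega>. t (Z \<omega>)) P"
    if [measurable]: "Measurable.pred M P" for P
    using Z_range by (intro sum_cprob_partition) (auto simp: W_def)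
  have "of_bool (t (insert l w)) * q1 M Z l w = cprob M (\<lambda>\<omega>. Z \<omega> - {l} = w \<and> t (Z \<omega>)) (\<lambda>\<omega>. l \<in> Z \<omega>)"
    for w
  proof -
    have "{\<omega>\<in>space M. (Z \<omega> - {l} = w \<and> t (Z \<omega>)) \<and> l \<in> Z \<omega>}
        = (if t (insert l w) then {\<omega>\<in>space M. Z \<omega> - {l} = w \<and> l \<in> Z \<omega>} else {})"
      by (auto simp: insert_absorb)
    then show ?thesis
      by (simp add: q1_def cprob_def)
  qed
  moreover have "of_bool (t w) * q0 M Z l w = cprob M (\<lambda>\<omega>. Z \<omega> - {l} = w \<and> t (Z \<omega>)) (\<lambda>\<omega>. l \<notin> Z \<omega>)"
    for w
  proof -
    have "{\<omega>\<in>space M. (Z \<omega> - {l} = w \<and> t (Z \<omega>)) \<and> l \<notin> Z \<omega>}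
        = (if t w then {\<omega>\<in>space M. Z \<omega> - {l} = w \<and> l \<notin> Z \<omega>} else {})"
      by auto
    then show ?thesis
      by (simp add: q0_def cprob_def)
  qed
  ultimately show ?thesis
    by (simp add: phi_def W_def[symmetric] sum_subtractf partition)
qed

lemma piZ_eq_sum_theta_phi:
  "piZ M D Z l = (\<Sum>t\<in>ctypes L. theta M D t * phi L M Z t l)"
  by (simp add: piZ_def phi_eq_cprob_diff cexp_Dobs_instrument_event[of "\<lambda>z. l \<in> z"]
      cexp_Dobs_instrument_event[of "\<lambda>z. l \<notin> z"] right_diff_distrib sum_subtractf)

lemma rhoZ_eq_sum_theta_LATE_phi:
  assumes "prob {\<omega>\<in>space M. l \<in> Z \<omega>} \<noteq> 0" and "prob {\<omega>\<in>space M. l \<notin> Z \<omega>} \<noteq> 0"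
  shows "rhoZ M D Z Y0 Y1 l = (\<Sum>t\<in>ctypes L. theta M D t * LATE M D Y0 Y1 t * phi L M Z t l)"
  using assms
  by (simp add: rhoZ_def phi_eq_cprob_diff cexp_Yobs_instrument_event[of "\<lambda>z. l \<in> z"]
      cexp_Yobs_instrument_event[of "\<lambda>z. l \<notin> z"] right_diff_distrib sum_subtractf)

lemma prob_instrument_nondegenerate:
  assumes "covZ_posdef L M Z" and "l < L"
  shows "prob {\<omega>\<in>space M. l \<in> Z \<omega>} > 0" and "prob {\<omega>\<in>space M. l \<notin> Z \<omega>} > 0"
proof -
  have "0 < pZ M Z l * (1 - pZ M Z l)"
    using covZ_posdef_diag_pos[OF assms] by (simp add: covZ_diag)
  moreover have "{\<omega>\<in>space M. l \<notin> Z \<omega>} = space M - {\<omega>\<in>space M. l \<in> Z \<omega>}"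
    by auto
  then have "prob {\<omega>\<in>space M. l \<notin> Z \<omega>} = 1 - pZ M Z l"
    by (simp add: prob_compl pZ_def)
  ultimately show "prob {\<omega>\<in>space M. l \<in> Z \<omega>} > 0" and "prob {\<omega>\<in>space M. l \<notin> Z \<omega>} > 0"
    by (auto simp: pZ_def zero_less_mult_iff)
qed

end

theorem proposition1:
  fixes M :: "'a measure" and L :: nat
    and Z :: "'a \<Rightarrow> nat set"
    and D :: "'a \<Rightarrow> nat set \<Rightarrow> bool"
    and Y0 Y1 :: "'a \<Rightarrow> real"
  assumes "prob_space M"
    and "L \<ge> 2"
    and Z_meas: "Z \<in> M \<rightarrow>\<^sub>M count_space UNIV"
    and Z_range: "\<And>\<omega>. \<omega> \<in> space M \<Longrightarrow> Z \<omega> \<subseteq> {..<L}"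
    and D_meas: "D \<in> M \<rightarrow>\<^sub>M count_space UNIV"
    and D_range: "\<And>\<omega>. \<omega> \<in> space M \<Longrightarrow> D \<omega> \<in> ctypes L"
    and Y0_int: "integrable M Y0"
    and Y1_int: "integrable M Y1"
    and A1: "indep_rv M
               (borel \<Otimes>\<^sub>M (borel \<Otimes>\<^sub>M count_space UNIV)) (\<lambda>\<omega>. (Y0 \<omega>, Y1 \<omega>, D \<omega>))
               (count_space UNIV) Z"
    and A2: "\<And>\<omega> z z'. \<omega> \<in> space M \<Longrightarrow> z \<subseteq> z' \<Longrightarrow> z' \<subseteq> {..<L}
               \<Longrightarrow> D \<omega> z \<Longrightarrow> D \<omega> z'"
    and A3_p: "\<And>l. l < L \<Longrightarrow> pZ M Z l > 0"
    and A3_pi: "\<And>l. l < L \<Longrightarrow> piZ M D Z l > 0"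
    and A3_cov: "covZ_posdef L M Z"
    and l: "l < L"
  shows "wald M D Z Y0 Y1 l = (\<Sum>t\<in>ctypes L. LATE M D Y0 Y1 t * alpha L M D Z t l)
         \<and> (\<Sum>t\<in>ctypes L. alpha L M D Z t l) = 1"
proof -
  interpret binary_iv_model M L Z D Y0 Y1
    using assms by (simp add: binary_iv_model_def binary_iv_model_axioms_def)
  have rho: "rhoZ M D Z Y0 Y1 l = (\<Sum>t\<in>ctypes L. theta M D t * LATE M D Y0 Y1 t * phi L M Z t l)"
    using prob_instrument_nondegenerate[OF A3_cov l] by (intro rhoZ_eq_sum_theta_LATE_phi) auto
  have "piZ M D Z l \<noteq> 0"
    using A3_pi[OF l] by simp
  then show ?thesis
    by (simp add: wald_def alpha_def rho piZ_eq_sum_theta_phi[symmetric]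
        sum_divide_distrib[symmetric] mult.assoc mult.left_commute)
qed

end
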